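(* Let $\Gamma=(V,E)$ be a reflexive locally finite $2$-faithful degenerate graph and let $X$ and $Y$ be $2$-atoms of $\Gamma$. Then $$|\partial(X\cap Y)|\le|\Gamma(X)\cap\Gamma(Y)|-|X\cap Y|\le\kappa_2(\Gamma),$$ and $$|\nabla(X)\setminus\nabla(Y)|\le|Y\setminus X|+\kappa_2(\Gamma)-|\partial(X\cap Y)|.$$
   Context: A graph is a pair $\Gamma=(V,E)$ with $E\subseteq V\times V$; reflexive means $(x,x)\in E$ for all $x$; $\Gamma(x)=\{y:(x,y)\in E\}$, $\Gamma(X)=\bigcup_{x\in X}\Gamma(x)$; the reverse graph is $\Gamma^-=(V,E^-)$, $E^-=\{(x,y):(y,x)\in E\}$; locally finite means $\Gamma(x)$, $\Gamma^-(x)$ finite for all $x$. $\partial(X)=\Gamma(X)\setminus X$, $\nabla(X)=V\setminus\Gamma(X)$. $\Gamma$ is $k$-separable if there is a finite $X$ with $|X|\ge k$, $|\nabla(X)|\ge k$; then $\kappa_k(\Gamma)=\min\{|\partial(X)|: X\text{ finite},|X|\ge k,|\nabla(X)|\ge k\}$. A $k$-fragment is a finite $X$ with $|X|\ge k$, $|\nabla(X)|\ge k$, $|\partial(X)|=\kappa_k(\Gamma)$; a $k$-atom is a $k$-fragment of minimum cardinality. $\Gamma$ is $k$-faithful if $|A|\le|\nabla(A)|$ for a $k$-atom $A$. $\Gamma$ is degenerate if it is $2$-separable and $\kappa_2(\Gamma)=\kappa_1(\Gamma)$. *)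

theory Defs
  imports Main
begin

definition graph :: "'a set \<Rightarrow> ('a \<times> 'a) set \<Rightarrow> bool" where
  "graph V E \<longleftrightarrow> E \<subseteq> V \<times> V"

definition reflexive_graph :: "'a set \<Rightarrow> ('a \<times> 'a) set \<Rightarrow> bool" where
  "reflexive_graph V E \<longleftrightarrow> (\<forall>x\<in>V. (x, x) \<in> E)"

definition nbr :: "('a \<times> 'a) set \<Rightarrow> 'a \<Rightarrow> 'a set" where
  "nbr E x = {y. (x, y) \<in> E}"

definition nbrs :: "('a \<times> 'a) set \<Rightarrow> 'a set \<Rightarrow> 'a set" where
  "nbrs E X = (\<Union>x\<in>X. nbr E x)"

definition rev_graph :: "('a \<times> 'a) set \<Rightarrow> ('a \<times> 'a) set" where
  "rev_graph E = {(x, y). (y, x) \<in> E}"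

definition locally_finite :: "'a set \<Rightarrow> ('a \<times> 'a) set \<Rightarrow> bool" where
  "locally_finite V E \<longleftrightarrow> (\<forall>x\<in>V. finite (nbr E x) \<and> finite (nbr (rev_graph E) x))"

definition bdry :: "('a \<times> 'a) set \<Rightarrow> 'a set \<Rightarrow> 'a set" where
  "bdry E X = nbrs E X - X"

definition nabla :: "'a set \<Rightarrow> ('a \<times> 'a) set \<Rightarrow> 'a set \<Rightarrow> 'a set" where
  "nabla V E X = V - nbrs E X"

definition card_ge :: "'a set \<Rightarrow> nat \<Rightarrow> bool" where
  "card_ge S k \<longleftrightarrow> infinite S \<or> k \<le> card S"

definition card_le :: "'a set \<Rightarrow> 'b set \<Rightarrow> bool" where
  "card_le S T \<longleftrightarrow> finite S \<and> (infinite T \<or> card S \<le> card T)"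

definition admissible :: "'a set \<Rightarrow> ('a \<times> 'a) set \<Rightarrow> nat \<Rightarrow> 'a set \<Rightarrow> bool" where
  "admissible V E k X \<longleftrightarrow> X \<subseteq> V \<and> finite X \<and> k \<le> card X \<and> card_ge (nabla V E X) k"

definition separable :: "'a set \<Rightarrow> ('a \<times> 'a) set \<Rightarrow> nat \<Rightarrow> bool" where
  "separable V E k \<longleftrightarrow> (\<exists>X. admissible V E k X)"

definition kappa :: "'a set \<Rightarrow> ('a \<times> 'a) set \<Rightarrow> nat \<Rightarrow> nat" where
  "kappa V E k = (LEAST n. \<exists>X. admissible V E k X \<and> card (bdry E X) = n)"

definition fragment :: "'a set \<Rightarrow> ('a \<times> 'a) set \<Rightarrow> nat \<Rightarrow> 'a set \<Rightarrow> bool" where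
  "fragment V E k X \<longleftrightarrow> admissible V E k X \<and> card (bdry E X) = kappa V E k"

definition atom :: "'a set \<Rightarrow> ('a \<times> 'a) set \<Rightarrow> nat \<Rightarrow> 'a set \<Rightarrow> bool" where
  "atom V E k A \<longleftrightarrow> fragment V E k A \<and> (\<forall>X. fragment V E k X \<longrightarrow> card A \<le> card X)"

definition faithful :: "'a set \<Rightarrow> ('a \<times> 'a) set \<Rightarrow> nat \<Rightarrow> bool" where
  "faithful V E k \<longleftrightarrow> (\<exists>A. atom V E k A \<and> card_le A (nabla V E A))"

definition degenerate :: "'a set \<Rightarrow> ('a \<times> 'a) set \<Rightarrow> bool" where
  "degenerate V E \<longleftrightarrow> separable V E 2 \<and> kappa V E 2 = kappa V E 1"

end

theory Submission
  imports Defs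
begin

text \<open>
  Let \<open>k = \<kappa>\<^sub>2 = \<kappa>\<^sub>1\<close>, so that \<open>|\<Gamma>(X)| = |X| + k\<close> for the 2-atoms \<open>X\<close>, \<open>Y\<close>, which have
  equal size. The union \<open>X \<union> Y\<close> still has boundary at least \<open>k\<close>: either it misses some vertex,
  and then it is 1-admissible and degeneracy applies, or \<open>\<Gamma>(X \<union> Y) = V\<close>, and then
  faithfulness forces \<open>|V| \<ge> 2|X| + k \<ge> |X \<union> Y| + k\<close>. Inclusion-exclusion for \<open>\<Gamma>(X)\<close> and
  \<open>\<Gamma>(Y)\<close> turns this into \<open>|\<Gamma>(X) \<inter> \<Gamma>(Y)| \<le> |X \<inter> Y| + k\<close>, and \<open>\<Gamma>(X) \<inter> \<Gamma>(Y)\<close> contains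
  the disjoint sets \<open>X \<inter> Y\<close> and \<open>\<partial>(X \<inter> Y)\<close>. Finally \<open>\<nabla>(X) - \<nabla>(Y) = \<Gamma>(Y) - \<Gamma>(X)\<close>.
\<close>

lemma finite_nbrs: "locally_finite V E \<Longrightarrow> finite S \<Longrightarrow> S \<subseteq> V \<Longrightarrow> finite (nbrs E S)"
  unfolding locally_finite_def nbrs_def by (auto intro!: finite_UN_I)

lemma nbrs_subset: "graph V E \<Longrightarrow> nbrs E S \<subseteq> V"
  unfolding graph_def nbrs_def nbr_def by auto

lemma subset_nbrs: "reflexive_graph V E \<Longrightarrow> S \<subseteq> V \<Longrightarrow> S \<subseteq> nbrs E S"
  unfolding reflexive_graph_def nbrs_def nbr_def by auto

lemma nbrs_Un: "nbrs E (A \<union> B) = nbrs E A \<union> nbrs E B"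
  unfolding nbrs_def by auto

lemma nbrs_Int_subset: "nbrs E (A \<inter> B) \<subseteq> nbrs E A \<inter> nbrs E B"
  unfolding nbrs_def by auto

lemma card_nbrs:
  assumes "reflexive_graph V E" "locally_finite V E" "finite S" "S \<subseteq> V"
  shows "card (nbrs E S) = card S + card (bdry E S)"
proof -
  have sub: "S \<subseteq> nbrs E S" using subset_nbrs assms(1,4) by blast
  have fin: "finite (nbrs E S)" using finite_nbrs assms(2-4) by blast
  have "card (bdry E S) = card (nbrs E S) - card S"
    unfolding bdry_def using card_Diff_subset[OF assms(3) sub] .
  then show ?thesis using card_mono[OF fin sub] by linarith
qed

lemma kappa_le_card_bdry: "admissible V E k S \<Longrightarrow> kappa V E k \<le> card (bdry E S)"
  unfolding kappa_def by (rule Least_le) blast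

lemma atom_card_eq: "atom V E k A \<Longrightarrow> atom V E k B \<Longrightarrow> card A = card B"
  unfolding atom_def by (simp add: le_antisym)

lemma card_nbrs_atom:
  assumes "reflexive_graph V E" "locally_finite V E" "atom V E k A"
  shows "card (nbrs E A) = card A + kappa V E k"
  using assms card_nbrs[of V E A] unfolding atom_def fragment_def admissible_def by auto

lemma card_vertices_ge_atoms:
  assumes G: "graph V E" and R: "reflexive_graph V E" and L: "locally_finite V E"
    and "finite V" and "faithful V E k" and X: "atom V E k X"
  shows "2 * card X + kappa V E k \<le> card V"
proof -
  obtain A where A: "atom V E k A" "card_le A (nabla V E A)"
    using \<open>faithful V E k\<close> unfolding faithful_def by blast
  have "card A \<le> card (nabla V E A)"
    using A(2) \<open>finite V\<close> unfolding card_le_def nabla_def by auto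
  moreover have "card V = card (nbrs E A) + card (nabla V E A)"
  proof -
    have "nbrs E A \<subseteq> V" by (rule nbrs_subset[OF G])
    then show ?thesis
      unfolding nabla_def using \<open>finite V\<close> card_Diff_subset[of "nbrs E A" V] card_mono[of V "nbrs E A"]
      by (simp add: finite_subset)
  qed
  moreover have "card A = card X" using atom_card_eq A(1) X by blast
  ultimately show ?thesis using card_nbrs_atom[OF R L A(1)] by linarith
qed

lemma kappa_le_card_bdry_small:
  assumes G: "graph V E" and R: "reflexive_graph V E" and L: "locally_finite V E"
    and "faithful V E k" and "kappa V E 1 = kappa V E k" and "atom V E k X"
    and S: "finite S" "S \<subseteq> V" "S \<noteq> {}" and small: "card S \<le> 2 * card X"
  shows "kappa V E k \<le> card (bdry E S)"
proof (cases "nabla V E S = {}")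
  case False
  have "1 \<le> card S" using S by (simp add: Suc_le_eq card_gt_0_iff)
  moreover have "card_ge (nabla V E S) 1"
    using False unfolding card_ge_def by (auto simp: Suc_le_eq card_gt_0_iff)
  ultimately have "admissible V E 1 S" using S unfolding admissible_def by blast
  then have "kappa V E 1 \<le> card (bdry E S)" by (rule kappa_le_card_bdry)
  with \<open>kappa V E 1 = kappa V E k\<close> show ?thesis by simp
next
  case True
  then have V: "V = nbrs E S"
    using nbrs_subset[OF G] unfolding nabla_def by auto
  then have "finite V" using finite_nbrs[OF L S(1,2)] by simp
  then have "2 * card X + kappa V E k \<le> card (nbrs E S)"
    using card_vertices_ge_atoms[OF G R L _ \<open>faithful V E k\<close> \<open>atom V E k X\<close>] V by simp
  then show ?thesis using card_nbrs[OF R L S(1,2)] small by linarith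
qed

lemma card_nbrs_Int_atoms_le:
  assumes G: "graph V E" and R: "reflexive_graph V E" and L: "locally_finite V E"
    and "faithful V E 2" and "degenerate V E" and X: "atom V E 2 X" and Y: "atom V E 2 Y"
  shows "card (nbrs E X \<inter> nbrs E Y) \<le> card (X \<inter> Y) + kappa V E 2"
proof -
  have fX: "finite X" "X \<subseteq> V" "2 \<le> card X" and fY: "finite Y" "Y \<subseteq> V"
    using X Y unfolding atom_def fragment_def admissible_def by auto
  have "kappa V E 1 = kappa V E 2" using \<open>degenerate V E\<close> unfolding degenerate_def by simp
  moreover have "X \<union> Y \<noteq> {}" using fX(3) by auto
  moreover have "card (X \<union> Y) \<le> 2 * card X"
    using card_Un_le[of X Y] atom_card_eq[OF X Y] by linarith
  ultimately have "kappa V E 2 \<le> card (bdry E (X \<union> Y))"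
    using kappa_le_card_bdry_small[OF G R L \<open>faithful V E 2\<close> _ X, of "X \<union> Y"] fX fY
    by simp
  then have "card (X \<union> Y) + kappa V E 2 \<le> card (nbrs E X \<union> nbrs E Y)"
    using card_nbrs[OF R L, of "X \<union> Y"] fX fY by (simp add: nbrs_Un)
  moreover have "card (nbrs E X \<union> nbrs E Y) + card (nbrs E X \<inter> nbrs E Y)
      = card X + card Y + 2 * kappa V E 2"
    using card_Un_Int[OF finite_nbrs[OF L fX(1,2)] finite_nbrs[OF L fY(1,2)]]
      card_nbrs_atom[OF R L X] card_nbrs_atom[OF R L Y] by simp
  moreover have "card (X \<union> Y) + card (X \<inter> Y) = card X + card Y"
    using card_Un_Int[OF fX(1) fY(1)] by simp
  ultimately show ?thesis by linarith
qed

lemma card_bdry_Int_le: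
  assumes R: "reflexive_graph V E" and L: "locally_finite V E"
    and X: "finite X" "X \<subseteq> V" and Y: "Y \<subseteq> V"
  shows "card (bdry E (X \<inter> Y)) + card (X \<inter> Y) \<le> card (nbrs E X \<inter> nbrs E Y)"
proof -
  have sub: "bdry E (X \<inter> Y) \<union> (X \<inter> Y) \<subseteq> nbrs E X \<inter> nbrs E Y"
    using nbrs_Int_subset[of E X Y] subset_nbrs[OF R X(2)] subset_nbrs[OF R Y]
    unfolding bdry_def by auto
  have fin: "finite (nbrs E X \<inter> nbrs E Y)" using finite_nbrs[OF L X] by blast
  have "finite (bdry E (X \<inter> Y))" using finite_subset[OF _ fin] sub by blast
  then have "card (bdry E (X \<inter> Y) \<union> (X \<inter> Y)) = card (bdry E (X \<inter> Y)) + card (X \<inter> Y)"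
    using X(1) by (intro card_Un_disjoint) (auto simp: bdry_def)
  then show ?thesis using card_mono[OF fin sub] by simp
qed

lemma nabla_Diff: "graph V E \<Longrightarrow> nabla V E X - nabla V E Y = nbrs E Y - nbrs E X"
  using nbrs_subset[of V E] unfolding nabla_def by blast

theorem lemma5p2:
  fixes V :: "'a set" and E :: "('a \<times> 'a) set" and X Y :: "'a set"
  assumes "graph V E" and "reflexive_graph V E" and "locally_finite V E"
    and "faithful V E 2" and "degenerate V E"
    and "atom V E 2 X" and "atom V E 2 Y"
  shows "int (card (bdry E (X \<inter> Y)))
           \<le> int (card (nbrs E X \<inter> nbrs E Y)) - int (card (X \<inter> Y))
       \<and> int (card (nbrs E X \<inter> nbrs E Y)) - int (card (X \<inter> Y)) \<le> int (kappa V E 2)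
       \<and> int (card (nabla V E X - nabla V E Y))
           \<le> int (card (Y - X)) + int (kappa V E 2) - int (card (bdry E (X \<inter> Y)))"
proof -
  have X: "finite X" "X \<subseteq> V" and Y: "finite Y" "Y \<subseteq> V"
    using assms(6,7) unfolding atom_def fragment_def admissible_def by auto
  have bdry: "card (bdry E (X \<inter> Y)) + card (X \<inter> Y) \<le> card (nbrs E X \<inter> nbrs E Y)"
    using card_bdry_Int_le[OF assms(2,3) X Y(2)] .
  have common: "card (nbrs E X \<inter> nbrs E Y) \<le> card (X \<inter> Y) + kappa V E 2"
    using card_nbrs_Int_atoms_le assms by blast
  have "card (nbrs E Y - nbrs E X) + card (nbrs E X \<inter> nbrs E Y) = card (nbrs E Y)"
    using finite_nbrs[OF assms(3) Y] by (metis Int_commute card_Int_Diff add.commute)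
  moreover have "card (Y - X) + card (X \<inter> Y) = card Y"
    using Y(1) by (metis Int_commute card_Int_Diff add.commute)
  ultimately show ?thesis
    unfolding nabla_Diff[OF assms(1)]
    using bdry common card_nbrs_atom[OF assms(2,3,7)] by linarith
qed

end
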